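(* Consider the queue rule with budget $B$, winner endowments $w$ and ranking scores $r$. Fix a winner $i$ whose score is unique, i.e. $r_i\ne r_j$ for all $j\ne i$. Suppose winner $i$ is split into subaccounts with endowments $z_1,\dots,z_m>0$, $\sum_{a=1}^mz_a=w_i$, each child keeping the parent's score $r_i$, while all other winners are unchanged. Let $x_i(B)$ be the seizure from $i$ in the unsplit instance, and $\tilde x_a(B)$ the seizure from child $a$ in the split instance. Then \[\sum_{a=1}^m\tilde x_a(B)=x_i(B),\] i.e. the queue rule is Sybil resistant for such splits.
   Context: Winners $j$ have haircutable endowments $w_j>0$ and ranking scores $r_j\in\mathbb{R}$. The (wealth-space) queue rule with budget $B\ge0$ works as follows: - It processes winners in decreasing order of score. - Each processed winner $j$ has $x_j=\min\{w_j,\text{remaining budget}\}$ seized. - The seized amount is then subtracted from the remaining budget, which starts at $B$. - Ties in score may be processed in any order. *)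

theory Defs
  imports Complex_Main
begin

definition queue_order :: "'a set \<Rightarrow> ('a \<Rightarrow> real) \<Rightarrow> 'a list \<Rightarrow> bool" where
  "queue_order W r xs \<longleftrightarrow> distinct xs \<and> set xs = W \<and> sorted_wrt (\<lambda>a b. r b \<le> r a) xs"

fun queue_seizure :: "('a \<Rightarrow> real) \<Rightarrow> real \<Rightarrow> 'a list \<Rightarrow> 'a \<Rightarrow> real" where
  "queue_seizure w B [] = (\<lambda>_. 0)"
| "queue_seizure w B (j # xs) =
     (let x = min (w j) B in (queue_seizure w (B - x) xs)(j := x))"

text \<open>Split instance: winners are Inl j (j an unchanged original winner) and Inr a (child a).\<close>
definition split_endow :: "('a \<Rightarrow> real) \<Rightarrow> (nat \<Rightarrow> real) \<Rightarrow> 'a + nat \<Rightarrow> real" where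
  "split_endow w z = case_sum w z"

definition split_score :: "('a \<Rightarrow> real) \<Rightarrow> 'a \<Rightarrow> 'a + nat \<Rightarrow> real" where
  "split_score r i = case_sum r (\<lambda>_. r i)"

end

theory Submission
  imports Defs
begin

text \<open>The queue rule seizes from a score class \<open>C\<close> exactly what the budget left over by the
  strictly higher-ranked winners allows, namely \<open>min (w C) (max 0 (B - w(above C)))\<close>, regardless
  of how \<open>C\<close> is divided into winners or in which order ties are processed. Splitting the
  uniquely-ranked winner \<open>i\<close> turns its class \<open>{i}\<close> into the class of its children, which has the
  same total endowment and the same winners above it.\<close>

fun queue_remaining :: "('a \<Rightarrow> real) \<Rightarrow> real \<Rightarrow> 'a list \<Rightarrow> real" where
  "queue_remaining w B [] = B"
| "queue_remaining w B (j # xs) = queue_remaining w (B - min (w j) B) xs"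

lemma queue_seizure_append:
  "queue_seizure w B (xs @ ys) j =
    (if j \<in> set xs then queue_seizure w B xs j else queue_seizure w (queue_remaining w B xs) ys j)"
  by (induction xs arbitrary: B) (auto simp: Let_def)

lemma queue_remaining_eq:
  assumes "B \<ge> 0" and "\<forall>j\<in>set xs. w j \<ge> 0"
  shows "queue_remaining w B xs = max 0 (B - sum_list (map w xs))"
  using assms
proof (induction xs arbitrary: B)
  case (Cons j xs)
  have "sum_list (map w xs) \<ge> 0"
    using Cons.prems by (intro sum_list_nonneg) auto
  with Cons show ?case by auto
qed simp

lemma sum_queue_seizure:
  assumes "B \<ge> 0" and "distinct xs" and "\<forall>j\<in>set xs. w j \<ge> 0"
  shows "(\<Sum>j\<in>set xs. queue_seizure w B xs j) = min (sum_list (map w xs)) B"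
  using assms
proof (induction xs arbitrary: B)
  case (Cons j xs)
  let ?B = "B - min (w j) B"
  have "sum_list (map w xs) \<ge> 0"
    using Cons.prems by (intro sum_list_nonneg) auto
  have "(\<Sum>k\<in>set (j # xs). queue_seizure w B (j # xs) k)
      = min (w j) B + (\<Sum>k\<in>set xs. queue_seizure w ?B xs k)"
    using Cons.prems by (simp add: Let_def) (intro sum.cong, auto)
  also have "\<dots> = min (w j) B + min (sum_list (map w xs)) ?B"
    using Cons by simp
  finally show ?case
    using \<open>sum_list (map w xs) \<ge> 0\<close> by auto
qed simp

lemma sorted_wrt_filter_upward_closed:
  assumes "sorted_wrt (\<lambda>a b. s b \<le> s a) xs"
    and "\<And>a b. P b \<Longrightarrow> s b \<le> s a \<Longrightarrow> P a"
  shows "xs = filter P xs @ filter (\<lambda>e. \<not> P e) xs"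
  using assms(1)
proof (induction xs)
  case (Cons x xs)
  show ?case
  proof (cases "P x")
    case False
    then have "\<forall>y\<in>set xs. \<not> P y"
      using Cons.prems assms(2) by auto
    with False show ?thesis
      by simp
  qed (use Cons in simp)
qed simp

lemma queue_order_score_class_split:
  assumes "queue_order V s xs"
  shows "xs = filter (\<lambda>e. t < s e) xs @ filter (\<lambda>e. s e = t) xs @ filter (\<lambda>e. s e < t) xs"
proof -
  have sorted: "sorted_wrt (\<lambda>a b. s b \<le> s a) xs"
    using assms by (simp add: queue_order_def)
  then have "sorted_wrt (\<lambda>a b. s b \<le> s a) (filter (\<lambda>e. \<not> t < s e) xs)"
    by (simp add: sorted_wrt_filter)
  then have "filter (\<lambda>e. \<not> t < s e) xs
      = filter (\<lambda>e. t \<le> s e) (filter (\<lambda>e. \<not> t < s e) xs)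
        @ filter (\<lambda>e. \<not> t \<le> s e) (filter (\<lambda>e. \<not> t < s e) xs)"
    by (rule sorted_wrt_filter_upward_closed) auto
  also have "filter (\<lambda>e. t \<le> s e) (filter (\<lambda>e. \<not> t < s e) xs) = filter (\<lambda>e. s e = t) xs"
    by (auto simp: filter_filter intro: filter_cong)
  also have "filter (\<lambda>e. \<not> t \<le> s e) (filter (\<lambda>e. \<not> t < s e) xs) = filter (\<lambda>e. s e < t) xs"
    by (auto simp: filter_filter intro: filter_cong)
  finally have "filter (\<lambda>e. \<not> t < s e) xs = filter (\<lambda>e. s e = t) xs @ filter (\<lambda>e. s e < t) xs" .
  moreover have "xs = filter (\<lambda>e. t < s e) xs @ filter (\<lambda>e. \<not> t < s e) xs"
    using sorted by (rule sorted_wrt_filter_upward_closed) auto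
  ultimately show ?thesis
    by simp
qed

theorem sum_queue_seizure_score_class:
  assumes "queue_order V s xs" and "\<forall>e\<in>V. w e \<ge> 0" and "B \<ge> 0"
  shows "(\<Sum>e\<in>{e\<in>V. s e = t}. queue_seizure w B xs e)
    = min (\<Sum>e\<in>{e\<in>V. s e = t}. w e) (max 0 (B - (\<Sum>e\<in>{e\<in>V. t < s e}. w e)))"
proof -
  define above where "above = filter (\<lambda>e. t < s e) xs"
  define ties where "ties = filter (\<lambda>e. s e = t) xs"
  define below where "below = filter (\<lambda>e. s e < t) xs"
  have xs: "xs = above @ ties @ below"
    unfolding above_def ties_def below_def using assms(1) by (rule queue_order_score_class_split)
  have V: "set xs = V" and "distinct xs"
    using assms(1) by (auto simp: queue_order_def)
  then have distinct: "distinct above" "distinct ties"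
    by (simp_all add: above_def ties_def)
  have set_above: "set above = {e\<in>V. t < s e}" and set_ties: "set ties = {e\<in>V. s e = t}"
    by (auto simp: above_def ties_def V)
  have "sum_list (map w above) = (\<Sum>e\<in>{e\<in>V. t < s e}. w e)"
    using distinct(1) by (simp add: sum_list_distinct_conv_sum_set set_above)
  then have remaining: "queue_remaining w B above = max 0 (B - (\<Sum>e\<in>{e\<in>V. t < s e}. w e))"
    using queue_remaining_eq[OF assms(3), of above w] assms(2) set_above by simp
  have "(\<Sum>e\<in>{e\<in>V. s e = t}. queue_seizure w B xs e)
      = (\<Sum>e\<in>set ties. queue_seizure w (queue_remaining w B above) ties e)"
    unfolding set_ties[symmetric] xs
    by (intro sum.cong) (auto simp: queue_seizure_append set_above set_ties)
  also have "\<dots> = min (\<Sum>e\<in>{e\<in>V. s e = t}. w e) (max 0 (B - (\<Sum>e\<in>{e\<in>V. t < s e}. w e)))"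
    using sum_queue_seizure[of _ ties w] distinct(2) assms(2)
    by (simp add: remaining sum_list_distinct_conv_sum_set set_ties)
  finally show ?thesis .
qed

theorem mainTheorem5:
  fixes W :: "'a set" and w r :: "'a \<Rightarrow> real" and B :: real and i :: 'a
    and m :: nat and z :: "nat \<Rightarrow> real"
    and xs :: "'a list" and ys :: "('a + nat) list"
  assumes "finite W"
    and "\<forall>j\<in>W. w j > 0"
    and "B \<ge> 0"
    and "i \<in> W"
    and "\<forall>j\<in>W. j \<noteq> i \<longrightarrow> r j \<noteq> r i"
    and "\<forall>a<m. z a > 0"
    and "(\<Sum>a<m. z a) = w i"
    and "queue_order W r xs"
    and "queue_order (Inl ` (W - {i}) \<union> Inr ` {..<m}) (split_score r i) ys"
  shows "(\<Sum>a<m. queue_seizure (split_endow w z) B ys (Inr a)) = queue_seizure w B xs i"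
proof -
  let ?V = "Inl ` (W - {i}) \<union> Inr ` {..<m}"
  let ?above = "\<Sum>j\<in>{j\<in>W. r i < r j}. w j"
  have "{j\<in>W. r j = r i} = {i}"
    using assms(4,5) by auto
  then have unsplit: "queue_seizure w B xs i = min (w i) (max 0 (B - ?above))"
    using sum_queue_seizure_score_class[OF assms(8) _ assms(3), of w "r i"] assms(2)
    by (simp add: less_imp_le)
  have children: "{e\<in>?V. split_score r i e = r i} = Inr ` {..<m}"
    using assms(5) by (auto simp: split_score_def)
  have "{e\<in>?V. r i < split_score r i e} = Inl ` {j\<in>W. r i < r j}"
    by (auto simp: split_score_def)
  then have above: "(\<Sum>e\<in>{e\<in>?V. r i < split_score r i e}. split_endow w z e) = ?above"
    by (simp add: sum.reindex split_endow_def)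
  have "(\<Sum>e\<in>Inr ` {..<m}. split_endow w z e) = w i"
    using assms(7) by (simp add: sum.reindex split_endow_def)
  moreover have "\<forall>e\<in>?V. split_endow w z e \<ge> 0"
    using assms(2,6) by (auto simp: split_endow_def less_imp_le)
  ultimately have "(\<Sum>e\<in>Inr ` {..<m}. queue_seizure (split_endow w z) B ys e)
      = min (w i) (max 0 (B - ?above))"
    using sum_queue_seizure_score_class[OF assms(9) _ assms(3), of "split_endow w z" "r i"]
    by (simp only: children above)
  then show ?thesis
    by (simp add: sum.reindex unsplit)
qed

end
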